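(* Let $m\ge1$, $N=2^m$, let $\mathcal{A}\subseteq[0,N-1]$ with $\mathcal{A}$ and $\mathcal{A}^c=[0,N-1]\setminus\mathcal{A}$ nonempty, and let $\mathbf{P}\in\mathbb{F}_2^{N\times N}$ be upper triangular with unit diagonal. Then $$\mathcal{C}_{\boldsymbol{G}_N}([\max(\mathcal{A}^c)+1,N-1])\subseteq\mathcal{C}_{\mathbf{P}\boldsymbol{G}_N}(\mathcal{A})\subseteq\mathcal{C}_{\boldsymbol{G}_N}([\min(\mathcal{A}),N-1]),$$ and $$\mathcal{C}_{\boldsymbol{G}_N}([N-\min(\mathcal{A}),N-1])\subseteq\mathcal{C}_{\mathbf{P}\boldsymbol{G}_N}(\mathcal{A})^{\perp}\subseteq\mathcal{C}_{\boldsymbol{G}_N}([N-1-\max(\mathcal{A}^c),N-1]).$$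
   Context: $[\ell,u]=\{\ell,\dots,u\}$ (empty if $\ell>u$). $\boldsymbol{G}_N=\begin{pmatrix}1&0\\1&1\end{pmatrix}^{\otimes m}$ over $\mathbb{F}_2$, rows/columns indexed by $0,\dots,N-1$; $\mathcal{C}_{\mathbf{B}}(\mathcal{S})$ is the code spanned by the rows of $\mathbf{B}$ indexed by $\mathcal{S}$. $\perp$ is the dual code for the standard inner product over $\mathbb{F}_2$. *)

theory Defs
  imports Main "HOL-Library.Z2"
begin

(* Matrices over F_2 are functions nat => nat => bit, meaningful on indices < size;
   vectors of length N are functions nat => bit, required to vanish outside [0,N-1]. *)

type_synonym vec = "nat \<Rightarrow> bit"
type_synonym mat = "nat \<Rightarrow> nat \<Rightarrow> bit"

definition G2 :: mat where
  "G2 i j = (if i < 2 \<and> j < 2 \<and> j \<le> i then 1 else 0)"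

definition kron :: "nat \<Rightarrow> mat \<Rightarrow> mat \<Rightarrow> mat" where
  "kron b A B i j = A (i div b) (j div b) * B (i mod b) (j mod b)"

(* G_{2^m} = [[1,0],[1,1]]^{\<otimes> m}; G_1 = [1] *)
fun GN :: "nat \<Rightarrow> mat" where
  "GN 0 = (\<lambda>i j. if i = 0 \<and> j = 0 then 1 else 0)"
| "GN (Suc m) = kron (2 ^ m) G2 (GN m)"

definition matmul :: "nat \<Rightarrow> mat \<Rightarrow> mat \<Rightarrow> mat" where
  "matmul n A B i j = (\<Sum>k<n. A i k * B k j)"

definition upper_unitriangular :: "nat \<Rightarrow> mat \<Rightarrow> bool" where
  "upper_unitriangular n P \<longleftrightarrow> (\<forall>i<n. \<forall>j<n. (j < i \<longrightarrow> P i j = 0) \<and> (i = j \<longrightarrow> P i j = 1))"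

definition row :: "nat \<Rightarrow> mat \<Rightarrow> nat \<Rightarrow> vec" where
  "row n B i = (\<lambda>j. if j < n then B i j else 0)"

definition code :: "nat \<Rightarrow> mat \<Rightarrow> nat set \<Rightarrow> vec set" where
  "code n B S = {v. \<exists>c :: nat \<Rightarrow> bit. v = (\<lambda>j. \<Sum>i\<in>S \<inter> {..<n}. c i * row n B i j)}"

definition inner :: "nat \<Rightarrow> vec \<Rightarrow> vec \<Rightarrow> bit" where
  "inner n u v = (\<Sum>j<n. u j * v j)"

definition dual :: "nat \<Rightarrow> vec set \<Rightarrow> vec set" where
  "dual n C = {v. (\<forall>j\<ge>n. v j = 0) \<and> (\<forall>u\<in>C. inner n u v = 0)}"

end

theory Submission
  imports Defs "HOL-Library.Function_Algebras" HOL.Modules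
begin

(* Every row of P G_N is the corresponding row of G_N plus a combination of later rows, so for
   upper unitriangular P the rows with index at least k of P G_N and of G_N span the same code;
   the first chain follows by monotonicity of the span.  For the duals, the rows g_i of G_N
   satisfy <g_i, g_(N-1-k)> = (G_N)_(k,i): this holds for [[1,0],[1,1]] and is preserved by
   Kronecker products.  As G_N is lower unitriangular, it makes C([N-k,N-1]) the dual of
   C([k,N-1]), and the second chain is the orthogonal complement of the first. *)

(* Keep ring arithmetic on bit instead of rewriting + and * to XOR and AND. *)
declare add_bit_eq_xor [simp del] mult_bit_eq_and [simp del]

interpretation vec: module "\<lambda>(c::bit) (v::vec) j. c * v j"
  by unfold_locales (simp_all add: fun_eq_iff algebra_simps)

lemma sum_fun_apply: "(\<Sum>i\<in>S. f i) x = (\<Sum>i\<in>S. f i x)"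
  by (induction S rule: infinite_finite_induct) simp_all

lemma subspace_code: "vec.subspace (code n B S)"
proof (rule vec.subspaceI)
  show "0 \<in> code n B S"
    by (auto simp: code_def fun_eq_iff intro!: exI[of _ "\<lambda>_. 0"])
next
  fix u v assume "u \<in> code n B S" "v \<in> code n B S"
  then obtain c d where "u = (\<lambda>j. \<Sum>i\<in>S \<inter> {..<n}. c i * row n B i j)"
    and "v = (\<lambda>j. \<Sum>i\<in>S \<inter> {..<n}. d i * row n B i j)"
    by (auto simp: code_def)
  then show "u + v \<in> code n B S"
    by (auto simp: code_def sum.distrib distrib_right intro!: exI[of _ "\<lambda>i. c i + d i"])
next
  fix a u assume "u \<in> code n B S"
  then obtain c where "u = (\<lambda>j. \<Sum>i\<in>S \<inter> {..<n}. c i * row n B i j)"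
    by (auto simp: code_def)
  then show "(\<lambda>j. a * u j) \<in> code n B S"
    by (auto simp: code_def sum_distrib_left mult.assoc intro!: exI[of _ "\<lambda>i. a * c i"])
qed

lemma code_eq_span: "code n B S = vec.span (row n B ` (S \<inter> {..<n}))"
proof
  show "code n B S \<subseteq> vec.span (row n B ` (S \<inter> {..<n}))"
  proof
    fix v assume "v \<in> code n B S"
    then obtain c where "v = (\<Sum>i\<in>S \<inter> {..<n}. (\<lambda>j. c i * row n B i j))"
      by (auto simp: code_def fun_eq_iff sum_fun_apply)
    then show "v \<in> vec.span (row n B ` (S \<inter> {..<n}))"
      by (simp only:) (intro vec.span_sum vec.span_scale vec.span_base imageI)
  qed
next
  have "row n B i \<in> code n B S" if "i \<in> S" "i < n" for i
    using that
    by (auto simp: code_def if_distrib[of "\<lambda>x. x * _"]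
        intro!: exI[of _ "\<lambda>k. if k = i then 1 else 0"] cong: if_cong)
  then show "vec.span (row n B ` (S \<inter> {..<n})) \<subseteq> code n B S"
    by (intro vec.span_minimal subspace_code) auto
qed

lemma row_in_code: "i \<in> S \<Longrightarrow> i < n \<Longrightarrow> row n B i \<in> code n B S"
  by (auto simp: code_eq_span intro: vec.span_base)

lemma code_subset_subspace:
  "vec.subspace V \<Longrightarrow> (\<And>i. i \<in> S \<Longrightarrow> i < n \<Longrightarrow> row n B i \<in> V) \<Longrightarrow> code n B S \<subseteq> V"
  unfolding code_eq_span by (rule vec.span_minimal) auto

lemma code_mono: "S \<subseteq> T \<Longrightarrow> code n B S \<subseteq> code n B T"
  by (rule code_subset_subspace[OF subspace_code]) (auto intro: row_in_code)

lemma code_vanishes: "v \<in> code n B S \<Longrightarrow> n \<le> j \<Longrightarrow> v j = 0"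
  by (auto simp: code_def row_def)

lemma inner_commute: "inner n u v = inner n v u"
  by (simp add: inner_def mult.commute)

lemma inner_diff_scale: "inner n u (\<lambda>j. v j - c * w j) = inner n u v - c * inner n u w"
  by (simp add: inner_def algebra_simps sum.distrib sum_distrib_left)

lemma subspace_orthogonal: "vec.subspace {u. inner n u v = 0}"
  by (rule vec.subspaceI)
    (simp_all add: inner_def sum.distrib distrib_right sum_distrib_left[symmetric] mult.assoc)

lemma dual_antimono: "C \<subseteq> D \<Longrightarrow> dual n D \<subseteq> dual n C"
  by (auto simp: dual_def)

lemma dual_code_iff:
  "v \<in> dual n (code n B S) \<longleftrightarrow>
     (\<forall>j\<ge>n. v j = 0) \<and> (\<forall>i\<in>S. i < n \<longrightarrow> inner n (row n B i) v = 0)"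
proof
  assume v: "(\<forall>j\<ge>n. v j = 0) \<and> (\<forall>i\<in>S. i < n \<longrightarrow> inner n (row n B i) v = 0)"
  then have "code n B S \<subseteq> {u. inner n u v = 0}"
    by (intro code_subset_subspace subspace_orthogonal) auto
  with v show "v \<in> dual n (code n B S)"
    by (auto simp: dual_def)
qed (auto simp: dual_def intro: row_in_code)

lemma row_matmul_upper_unitriangular:
  assumes "upper_unitriangular n P" "i < n"
  shows "row n (matmul n P B) i = row n B i + (\<Sum>l\<in>{Suc i..<n}. (\<lambda>j. P i l * row n B l j))"
    (is "_ = ?rhs")
proof
  fix j
  have "(\<Sum>l<n. P i l * B l j) = (\<Sum>l\<in>{i..<n}. P i l * B l j)"
    using assms by (intro sum.mono_neutral_right) (auto simp: upper_unitriangular_def)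
  also have "\<dots> = B i j + (\<Sum>l\<in>{Suc i..<n}. P i l * B l j)"
    using assms by (simp add: sum.atLeast_Suc_lessThan upper_unitriangular_def)
  finally show "row n (matmul n P B) i j = ?rhs j"
    by (simp add: row_def matmul_def sum_fun_apply)
qed

lemma code_matmul_upper_unitriangular_suffix:
  assumes "upper_unitriangular n P"
  shows "code n (matmul n P B) {k..<n} = code n B {k..<n}"
proof
  show "code n (matmul n P B) {k..<n} \<subseteq> code n B {k..<n}"
  proof (rule code_subset_subspace[OF subspace_code])
    fix i assume i: "i \<in> {k..<n}"
    then have "row n B i + (\<Sum>l\<in>{Suc i..<n}. (\<lambda>j. P i l * row n B l j)) \<in> code n B {k..<n}"
      by (intro vec.subspace_add[OF subspace_code] vec.subspace_sum[OF subspace_code]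
          vec.subspace_scale[OF subspace_code] row_in_code) auto
    with i show "row n (matmul n P B) i \<in> code n B {k..<n}"
      by (simp add: row_matmul_upper_unitriangular[OF assms])
  qed
next
  have "row n B i \<in> code n (matmul n P B) {k..<n}" if "k \<le> i" "i < n" for i
    using that
  proof (induction "n - i" arbitrary: i rule: less_induct)
    case less
    have "row n B i = row n (matmul n P B) i - (\<Sum>l\<in>{Suc i..<n}. (\<lambda>j. P i l * row n B l j))"
      using row_matmul_upper_unitriangular[OF assms less.prems(2)] by simp
    also have "\<dots> \<in> code n (matmul n P B) {k..<n}"
      using less by (intro vec.subspace_diff[OF subspace_code] vec.subspace_sum[OF subspace_code]
          vec.subspace_scale[OF subspace_code] row_in_code) auto
    finally show ?case .
  qed
  then show "code n B {k..<n} \<subseteq> code n (matmul n P B) {k..<n}"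
    by (intro code_subset_subspace subspace_code) auto
qed

definition lower_unitriangular :: "nat \<Rightarrow> mat \<Rightarrow> bool" where
  "lower_unitriangular n B \<longleftrightarrow> (\<forall>i<n. \<forall>j<n. (i < j \<longrightarrow> B i j = 0) \<and> (i = j \<longrightarrow> B i j = 1))"

lemma
  assumes "lower_unitriangular n B"
  shows lower_unitriangular_above_diag: "i < j \<Longrightarrow> j < n \<Longrightarrow> B i j = 0"
    and lower_unitriangular_diag: "i < n \<Longrightarrow> B i i = 1"
  using assms by (auto simp: lower_unitriangular_def)

lemma lower_unitriangular_in_code_lessThan:
  assumes B: "lower_unitriangular n B" and "k \<le> n" and "\<forall>j\<ge>k. v j = 0"
  shows "v \<in> code n B {..<k}"
  using assms(2,3)
proof (induction k arbitrary: v)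
  case 0
  then have "v = 0" by auto
  then show ?case by (simp only:) (rule vec.subspace_0[OF subspace_code])
next
  case (Suc k)
  define w where "w = (\<lambda>j. v j - v k * row n B k j)"
  have "w j = 0" if "k \<le> j" for j
  proof (cases "j < n")
    case True
    have "B k k = 1" and "k < j \<Longrightarrow> B k j = 0"
      using Suc.prems True
      by (auto intro: lower_unitriangular_above_diag[OF B] lower_unitriangular_diag[OF B])
    then show ?thesis using Suc.prems that True
      by (cases "j = k") (auto simp: w_def row_def)
  qed (use Suc.prems that in \<open>simp add: w_def row_def\<close>)
  then have "w \<in> code n B {..<k}"
    using Suc.IH[of w] Suc.prems by auto
  then have "w \<in> code n B {..<Suc k}"
    by (rule subsetD[OF code_mono, rotated]) auto
  moreover have "row n B k \<in> code n B {..<Suc k}"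
    using Suc.prems by (intro row_in_code) auto
  ultimately have "w + (\<lambda>j. v k * row n B k j) \<in> code n B {..<Suc k}"
    by (intro vec.subspace_add[OF subspace_code] vec.subspace_scale[OF subspace_code])
  moreover have "w + (\<lambda>j. v k * row n B k j) = v"
    by (simp add: w_def fun_eq_iff)
  ultimately show ?case by simp
qed

(* In matrix form B (J B)\<^sup>T = B\<^sup>T, where J reverses the order of the rows. *)
definition reversed_gram_transpose :: "nat \<Rightarrow> mat \<Rightarrow> bool" where
  "reversed_gram_transpose n B \<longleftrightarrow> (\<forall>i<n. \<forall>k<n. (\<Sum>j<n. B i j * B (n - 1 - k) j) = B k i)"

lemma inner_row_reversed_row:
  assumes "reversed_gram_transpose n B" "i < n" "k < n"
  shows "inner n (row n B i) (row n B (n - 1 - k)) = B k i"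
  using assms by (simp add: reversed_gram_transpose_def inner_def row_def)

lemma code_suffix_subset_dual:
  assumes B: "lower_unitriangular n B" and R: "reversed_gram_transpose n B"
  shows "code n B {n - k..<n} \<subseteq> dual n (code n B {k..<n})"
proof
  fix v assume v: "v \<in> code n B {n - k..<n}"
  have "inner n (row n B i) v = 0" if "k \<le> i" "i < n" for i
  proof -
    have "code n B {n - k..<n} \<subseteq> {v. inner n v (row n B i) = 0}"
    proof (rule code_subset_subspace[OF subspace_orthogonal])
      fix j assume "j \<in> {n - k..<n}"
      then have "j = n - 1 - (n - 1 - j)" and "n - 1 - j < i" using that by auto
      then have "inner n (row n B i) (row n B j) = 0"
        using that lower_unitriangular_above_diag[OF B] inner_row_reversed_row[OF R, of i "n - 1 - j"]
        by simp
      then show "row n B j \<in> {v. inner n v (row n B i) = 0}"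
        by (simp add: inner_commute)
    qed
    with v show ?thesis by (auto simp: inner_commute)
  qed
  then show "v \<in> dual n (code n B {k..<n})"
    using code_vanishes[OF v] by (auto simp: dual_code_iff)
qed

lemma dual_code_suffix_subset:
  assumes B: "lower_unitriangular n B" and R: "reversed_gram_transpose n B" and "k \<le> n"
  shows "dual n (code n B {k..<n}) \<subseteq> code n B {n - k..<n}"
  using assms(3)
proof (induction k)
  case 0
  show ?case
  proof
    fix v assume v: "v \<in> dual n (code n B {0..<n})"
    have "v j = 0" for j
    proof (cases "j < n")
      case True
      have "(\<lambda>l. if l = j then 1 else 0) \<in> code n B {0..<n}"
        using lower_unitriangular_in_code_lessThan[OF B order.refl] True
        by (simp add: atLeast0LessThan)
      then have "inner n (\<lambda>l. if l = j then 1 else 0) v = 0"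
        using v by (simp add: dual_def)
      then show ?thesis
        using True by (simp add: inner_def if_distrib[of "\<lambda>x. x * _"] cong: if_cong)
    qed (use v in \<open>simp add: dual_def\<close>)
    then have "v = 0" by (simp add: fun_eq_iff)
    then show "v \<in> code n B {n - 0..<n}"
      by (simp only:) (rule vec.subspace_0[OF subspace_code])
  qed
next
  case (Suc k)
  show ?case
  proof
    fix v assume v: "v \<in> dual n (code n B {Suc k..<n})"
    have "k < n" using Suc.prems by simp
    (* The row ?r is orthogonal to the rows after k and has inner product 1 with row k,
       so subtracting a multiple of it makes v orthogonal to row k as well. *)
    let ?r = "row n B (n - 1 - k)"
    define c where "c = inner n (row n B k) v"
    define w where "w = (\<lambda>j. v j - c * ?r j)"
    have "inner n (row n B i) w = 0" if "k \<le> i" "i < n" for i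
    proof (cases "i = k")
      case True
      then show ?thesis
        unfolding w_def inner_diff_scale
        using inner_row_reversed_row[OF R \<open>k < n\<close> \<open>k < n\<close>]
          lower_unitriangular_diag[OF B \<open>k < n\<close>]
        by (simp add: c_def)
    next
      case False
      then have "inner n (row n B i) v = 0" and "B k i = 0"
        using v that lower_unitriangular_above_diag[OF B] by (auto simp: dual_code_iff)
      then show ?thesis
        unfolding w_def inner_diff_scale
        using inner_row_reversed_row[OF R \<open>i < n\<close> \<open>k < n\<close>] by simp
    qed
    moreover have "w j = 0" if "n \<le> j" for j
      using v that by (simp add: w_def row_def dual_def)
    ultimately have "w \<in> dual n (code n B {k..<n})"
      by (auto simp: dual_code_iff)
    then have "w \<in> code n B {n - k..<n}"
      using Suc.IH Suc.prems by auto
    moreover have "code n B {n - k..<n} \<subseteq> code n B {n - Suc k..<n}"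
      by (rule code_mono) auto
    ultimately have "w \<in> code n B {n - Suc k..<n}" by blast
    moreover have "?r \<in> code n B {n - Suc k..<n}"
      using \<open>k < n\<close> by (intro row_in_code) auto
    ultimately have "w + (\<lambda>j. c * ?r j) \<in> code n B {n - Suc k..<n}"
      by (intro vec.subspace_add[OF subspace_code] vec.subspace_scale[OF subspace_code])
    moreover have "w + (\<lambda>j. c * ?r j) = v"
      by (simp add: w_def fun_eq_iff)
    ultimately show "v \<in> code n B {n - Suc k..<n}" by simp
  qed
qed

lemma lower_unitriangular_kron:
  assumes A: "lower_unitriangular a A" and B: "lower_unitriangular b B"
  shows "lower_unitriangular (a * b) (kron b A B)"
  unfolding lower_unitriangular_def
proof (intro allI impI conjI)
  fix i j assume ij: "i < a * b" "j < a * b"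
  then have div: "i div b < a" "j div b < a" and mod: "i mod b < b" "j mod b < b"
    by (auto simp: less_mult_imp_div_less mult.commute intro!: mod_less_divisor Nat.gr0I)
  show "kron b A B i j = 0" if "i < j"
  proof (cases "i div b = j div b")
    case True
    then have "i mod b < j mod b"
      using \<open>i < j\<close> by (metis div_mult_mod_eq nat_add_left_cancel_less)
    then show ?thesis using B mod by (simp add: kron_def lower_unitriangular_def)
  next
    case False
    then have "i div b < j div b"
      using \<open>i < j\<close> div_le_mono[of i j b] by simp
    then show ?thesis using A div by (simp add: kron_def lower_unitriangular_def)
  qed
  show "kron b A B i j = 1" if "i = j"
    using that A B div mod by (simp add: kron_def lower_unitriangular_def)
qed

lemma lower_unitriangular_GN: "lower_unitriangular (2 ^ m) (GN m)"
proof (induction m)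
  case (Suc m)
  have "lower_unitriangular 2 G2"
    by (simp add: lower_unitriangular_def G2_def)
  from lower_unitriangular_kron[OF this Suc.IH] show ?case by simp
qed (simp add: lower_unitriangular_def)

lemma sum_lessThan_mult_nat:
  "(\<Sum>j<a * (b::nat). f j) = (\<Sum>q<a. \<Sum>r<b. f (q * b + r)::'a::comm_monoid_add)"
proof -
  have "(\<Sum>r<b. f (q * b + r)) = sum f {q * b..<q * b + b}" for q
    using sum.shift_bounds_nat_ivl[of f 0 "q * b" b] by (simp add: atLeast0LessThan add.commute)
  then show ?thesis by (simp add: sum.nat_group)
qed

lemma reverse_div_mod:
  fixes k a b :: nat
  assumes "k < a * b"
  shows "(a * b - 1 - k) div b = a - 1 - k div b" and "(a * b - 1 - k) mod b = b - 1 - k mod b"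
proof -
  define q r where "q = k div b" and "r = k mod b"
  have "b > 0" using assms by (cases b) auto
  then have k: "k = q * b + r" and r: "r < b" by (simp_all add: q_def r_def)
  have "q < a" using assms by (simp add: q_def less_mult_imp_div_less)
  then obtain d where a: "a = Suc (q + d)" using less_imp_Suc_add by blast
  define s where "s = b - 1 - r"
  have "a * b - 1 - k = d * b + s" and "s < b"
    using r unfolding a k s_def by (simp_all add: algebra_simps)
  then show "(a * b - 1 - k) div b = a - 1 - k div b" "(a * b - 1 - k) mod b = b - 1 - k mod b"
    by (simp_all add: a s_def flip: q_def r_def)
qed

lemma reversed_gram_transpose_kron:
  assumes A: "reversed_gram_transpose a A" and B: "reversed_gram_transpose b B"
  shows "reversed_gram_transpose (a * b) (kron b A B)"
  unfolding reversed_gram_transpose_def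
proof (intro allI impI)
  fix i k assume i: "i < a * b" and k: "k < a * b"
  then have "b > 0" by (cases b) auto
  have div: "i div b < a" "k div b < a" and mod: "i mod b < b" "k mod b < b"
    using i k \<open>b > 0\<close> by (simp_all add: less_mult_imp_div_less)
  have "(\<Sum>j<a * b. kron b A B i j * kron b A B (a * b - 1 - k) j)
      = (\<Sum>q<a. \<Sum>r<b. (A (i div b) q * A (a - 1 - k div b) q) * (B (i mod b) r * B (b - 1 - k mod b) r))"
    unfolding sum_lessThan_mult_nat kron_def reverse_div_mod[OF k]
    using \<open>b > 0\<close> by (simp add: algebra_simps)
  also have "\<dots> = (\<Sum>q<a. A (i div b) q * A (a - 1 - k div b) q)
                  * (\<Sum>r<b. B (i mod b) r * B (b - 1 - k mod b) r)"
    by (simp add: sum_product)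
  also have "\<dots> = kron b A B k i"
    using A B div mod by (simp add: reversed_gram_transpose_def kron_def)
  finally show "(\<Sum>j<a * b. kron b A B i j * kron b A B (a * b - 1 - k) j) = kron b A B k i" .
qed

lemma reversed_gram_transpose_GN: "reversed_gram_transpose (2 ^ m) (GN m)"
proof (induction m)
  case (Suc m)
  have "reversed_gram_transpose 2 G2"
    by (auto simp: reversed_gram_transpose_def G2_def numeral_2_eq_2 less_Suc_eq add_bit_eq_xor)
  from reversed_gram_transpose_kron[OF this Suc.IH] show ?case by simp
qed (simp add: reversed_gram_transpose_def)

lemma code_matmul_between_suffix_codes:
  assumes B: "lower_unitriangular n B" "reversed_gram_transpose n B"
    and P: "upper_unitriangular n P"
    and "k \<le> n" and suffix: "{k..<n} \<subseteq> A" and prefix: "A \<subseteq> {l..<n}"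
  shows "code n B {k..<n} \<subseteq> code n (matmul n P B) A"
    and "code n (matmul n P B) A \<subseteq> code n B {l..<n}"
    and "code n B {n - l..<n} \<subseteq> dual n (code n (matmul n P B) A)"
    and "dual n (code n (matmul n P B) A) \<subseteq> code n B {n - k..<n}"
proof -
  show C1: "code n B {k..<n} \<subseteq> code n (matmul n P B) A"
    using code_mono[OF suffix, of n "matmul n P B"]
    by (simp add: code_matmul_upper_unitriangular_suffix[OF P])
  show C2: "code n (matmul n P B) A \<subseteq> code n B {l..<n}"
    using code_mono[OF prefix, of n "matmul n P B"]
    by (simp add: code_matmul_upper_unitriangular_suffix[OF P])
  show "code n B {n - l..<n} \<subseteq> dual n (code n (matmul n P B) A)"
    using code_suffix_subset_dual[OF B] dual_antimono[OF C2] by blast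
  have "dual n (code n (matmul n P B) A) \<subseteq> dual n (code n B {k..<n})"
    by (rule dual_antimono[OF C1])
  also have "\<dots> \<subseteq> code n B {n - k..<n}"
    by (rule dual_code_suffix_subset[OF B \<open>k \<le> n\<close>])
  finally show "dual n (code n (matmul n P B) A) \<subseteq> code n B {n - k..<n}" .
qed

lemma atLeastLessThan_Suc_Max_compl_subset:
  fixes A :: "nat set"
  shows "{Suc (Max ({0..n-1} - A))..<n} \<subseteq> A"
proof
  fix i assume i: "i \<in> {Suc (Max ({0..n-1} - A))..<n}"
  show "i \<in> A"
  proof (rule ccontr)
    assume "i \<notin> A"
    with i have "i \<le> Max ({0..n-1} - A)" by (intro Max_ge) auto
    with i show False by simp
  qed
qed

theorem proposition4:
  fixes m N :: nat and A :: "nat set" and P :: mat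
  assumes "m \<ge> 1" and "N = 2 ^ m"
    and "A \<subseteq> {0..N-1}" and "A \<noteq> {}" and "{0..N-1} - A \<noteq> {}"
    and "upper_unitriangular N P"
  shows "code N (GN m) {Max ({0..N-1} - A) + 1 .. N-1} \<subseteq> code N (matmul N P (GN m)) A
       \<and> code N (matmul N P (GN m)) A \<subseteq> code N (GN m) {Min A .. N-1}
       \<and> code N (GN m) {N - Min A .. N-1} \<subseteq> dual N (code N (matmul N P (GN m)) A)
       \<and> dual N (code N (matmul N P (GN m)) A) \<subseteq> code N (GN m) {N - 1 - Max ({0..N-1} - A) .. N-1}"
proof -
  define a where "a = Max ({0..N-1} - A)"
  have "N > 0" using assms(2) by simp
  then have ivl: "{x..N-1} = {x..<N}" for x by auto
  have "a \<in> {0..N-1} - A"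
    unfolding a_def using assms(5) by (intro Max_in) auto
  with \<open>N > 0\<close> have "Suc a \<le> N" by auto
  have "finite A" using assms(3) finite_subset by blast
  then have "A \<subseteq> {Min A..<N}"
    using assms(3) \<open>N > 0\<close> by auto
  moreover have "{Suc a..<N} \<subseteq> A"
    unfolding a_def by (rule atLeastLessThan_Suc_Max_compl_subset)
  moreover have "lower_unitriangular N (GN m)" "reversed_gram_transpose N (GN m)"
    using assms(2) lower_unitriangular_GN reversed_gram_transpose_GN by simp_all
  ultimately show ?thesis
    using code_matmul_between_suffix_codes[OF _ _ assms(6) \<open>Suc a \<le> N\<close>]
    unfolding a_def[symmetric] unfolding ivl by simp
qed

end
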